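(* Let $\Theta$ be a non-empty finite set, let $\mathcal{S}$ be a measurable subset of $\Delta(\Theta)$, and fix an interview cost $c>0$. Let $\pi,\pi'\in\Delta(\mathcal{S})$ be two populations with the same skill distribution, i.e. $p_\pi=p_{\pi'}$. Then: (a) There is systematic ex-ante discrimination against $\pi$ if and only if $\pi' \mathrel{M} \pi$ and $\pi\neq\pi'$. (b) There is unsystematic ex-ante discrimination if and only if neither $\pi \mathrel{M} \pi'$ nor $\pi' \mathrel{M} \pi$ holds. (c) There is no ex-ante discrimination if and only if $\pi=\pi'$.
   Context: $\Delta(\Theta)$ denotes the set of probability distributions on $\Theta$ (with its Borel $\sigma$-algebra). A population is a probability measure $\pi\in\Delta(\mathcal{S})$; its skill distribution is $p_\pi(\theta)=\int_{\mathcal{S}} s(\theta)\,\pi(\mathrm{d}s)$ for $\theta\in\Theta$. For a non-empty finite $A\subset\mathbb{R}^\Theta$, $v_A(s)=\max_{a\in A}\sum_{\theta\in\Theta}a(\theta)s(\theta)$. A firm is a pair $(A,\alpha)$ with $A$ a non-empty finite subset of $\mathbb{R}^\Theta$ and $0<\alpha\le 1$. Firm $(A,\alpha)$ excludes population $\pi$ if $\alpha\int_{\mathcal{S}}\max\{v_A,0\}\,\mathrm{d}\pi\le c$ (and interviews $\pi$ otherwise). For $\pi,\pi'$ with $p_\pi=p_{\pi'}$: there is systematic ex-ante discrimination against $\pi$ if every firm that excludes $\pi'$ also excludes $\pi$, and some firm excludes $\pi$ but not $\pi'$. There is unsystematic ex-ante discrimination if there is a firm that excludes $\pi$ but not $\pi'$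 and a firm that excludes $\pi'$ but not $\pi$. There is no ex-ante discrimination if there is neither systematic ex-ante discrimination (against $\pi$ or against $\pi'$) nor unsystematic ex-ante discrimination. $\pi' \mathrel{M} \pi$ means $\int_{\mathcal{S}} h\,\mathrm{d}\pi'\ge\int_{\mathcal{S}} h\,\mathrm{d}\pi$ for every convex continuous $h:\Delta(\Theta)\to\mathbb{R}$. *)

theory Defs
  imports "HOL-Probability.Probability"
begin

definition Delta_set :: "(real^'a::finite) set" where
  "Delta_set = {p. (\<forall>\<theta>. 0 \<le> p $ \<theta>) \<and> (\<Sum>\<theta>\<in>UNIV. p $ \<theta>) = 1}"

definition population :: "(real^'a::finite) set \<Rightarrow> (real^'a) measure \<Rightarrow> bool" where
  "population S \<pi> \<longleftrightarrow> prob_space \<pi> \<and> sets \<pi> = sets (restrict_space borel S)"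

definition skill :: "(real^'a::finite) measure \<Rightarrow> 'a \<Rightarrow> real" where
  "skill \<pi> \<theta> = (\<integral>s. s $ \<theta> \<partial>\<pi>)"

definition vA :: "(real^'a::finite) set \<Rightarrow> (real^'a) \<Rightarrow> real" where
  "vA A s = Max ((\<lambda>a. \<Sum>\<theta>\<in>UNIV. a $ \<theta> * s $ \<theta>) ` A)"

definition firm :: "(real^'a::finite) set \<Rightarrow> real \<Rightarrow> bool" where
  "firm A \<alpha> \<longleftrightarrow> finite A \<and> A \<noteq> {} \<and> 0 < \<alpha> \<and> \<alpha> \<le> 1"

definition excludes :: "real \<Rightarrow> (real^'a::finite) set \<Rightarrow> real \<Rightarrow> (real^'a) measure \<Rightarrow> bool" where
  "excludes c A \<alpha> \<pi> \<longleftrightarrow> \<alpha> * (\<integral>s. max (vA A s) 0 \<partial>\<pi>) \<le> c"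

definition sys_disc :: "real \<Rightarrow> (real^'a::finite) measure \<Rightarrow> (real^'a) measure \<Rightarrow> bool" where
  "sys_disc c \<pi> \<pi>' \<longleftrightarrow>
     (\<forall>A \<alpha>. firm A \<alpha> \<longrightarrow> excludes c A \<alpha> \<pi>' \<longrightarrow> excludes c A \<alpha> \<pi>) \<and>
     (\<exists>A \<alpha>. firm A \<alpha> \<and> excludes c A \<alpha> \<pi> \<and> \<not> excludes c A \<alpha> \<pi>')"

definition unsys_disc :: "real \<Rightarrow> (real^'a::finite) measure \<Rightarrow> (real^'a) measure \<Rightarrow> bool" where
  "unsys_disc c \<pi> \<pi>' \<longleftrightarrow>
     (\<exists>A \<alpha>. firm A \<alpha> \<and> excludes c A \<alpha> \<pi> \<and> \<not> excludes c A \<alpha> \<pi>') \<and>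
     (\<exists>A \<alpha>. firm A \<alpha> \<and> excludes c A \<alpha> \<pi>' \<and> \<not> excludes c A \<alpha> \<pi>)"

definition no_disc :: "real \<Rightarrow> (real^'a::finite) measure \<Rightarrow> (real^'a) measure \<Rightarrow> bool" where
  "no_disc c \<pi> \<pi>' \<longleftrightarrow> \<not> sys_disc c \<pi> \<pi>' \<and> \<not> sys_disc c \<pi>' \<pi> \<and> \<not> unsys_disc c \<pi> \<pi>'"

text \<open>M_order \<pi>' \<pi> means \<pi>' M \<pi>: \<pi>' dominates \<pi> in the convex order.\<close>
definition M_order :: "(real^'a::finite) measure \<Rightarrow> (real^'a) measure \<Rightarrow> bool" where
  "M_order \<pi>' \<pi> \<longleftrightarrow>
     (\<forall>h :: (real^'a) \<Rightarrow> real. convex_on Delta_set h \<and> continuous_on Delta_set h \<longrightarrow>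
        (\<integral>s. h s \<partial>\<pi>') \<ge> (\<integral>s. h s \<partial>\<pi>))"

end

theory Submission
  imports Defs
begin

text \<open>Write I_\<pi>(A) for the expected value of interviewing \<pi> with the options A, the integral of
  max(v_A, 0). Since v_{tA} = t v_A for t \<ge> 0, a firm can rescale its options until c lies strictly
  between I_\<pi>(A) and I_\<pi>'(A); so every firm that excludes \<pi>' also excludes \<pi> exactly when
  I_\<pi>(A) \<le> I_\<pi>'(A) for all A. The functions max(v_A, 0) are convex and continuous. Conversely, by
  separation from the epigraph and compactness of the simplex, every continuous convex function on
  it is a uniform limit of maxima of finitely many affine functions, and on the simplex these are
  functions v_A. Hence the condition above is \<pi>' M \<pi>. Finally the convex order is antisymmetric:
  if \<pi> and \<pi>' integrate all continuous convex functions equally, they agree on the orthants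
  {s. s \<le> x}, whose indicators are pointwise limits of differences of such functions, and these
  orthants generate the Borel sets. Parts (a)--(c) then follow propositionally.\<close>

section \<open>Convex functions\<close>

lemma convex_on_max:
  assumes "convex_on S f" "convex_on S g"
  shows "convex_on S (\<lambda>x. max (f x) (g x))"
proof (rule convex_onI)
  fix t :: real and x y assume t: "0 < t" "t < 1" and xy: "x \<in> S" "y \<in> S"
  have "f ((1 - t) *\<^sub>R x + t *\<^sub>R y) \<le> (1 - t) * f x + t * f y"
    "g ((1 - t) *\<^sub>R x + t *\<^sub>R y) \<le> (1 - t) * g x + t * g y"
    using convex_onD[OF assms(1)] convex_onD[OF assms(2)] t xy by auto
  moreover have "(1 - t) * f x + t * f y \<le> (1 - t) * max (f x) (g x) + t * max (f y) (g y)"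
    "(1 - t) * g x + t * g y \<le> (1 - t) * max (f x) (g x) + t * max (f y) (g y)"
    using t by (intro add_mono mult_left_mono; simp)+
  ultimately show "max (f ((1 - t) *\<^sub>R x + t *\<^sub>R y)) (g ((1 - t) *\<^sub>R x + t *\<^sub>R y))
      \<le> (1 - t) * max (f x) (g x) + t * max (f y) (g y)"
    by simp
qed (use assms convex_on_imp_convex in blast)

lemma convex_on_affine_minorant:
  fixes h :: "'a::euclidean_space \<Rightarrow> real"
  assumes "closed C" "convex_on C h" "continuous_on C h" "x0 \<in> C" "0 < e"
  shows "\<exists>a b. (\<forall>x\<in>C. a \<bullet> x + b \<le> h x) \<and> h x0 - e < a \<bullet> x0 + b"
proof -
  have "closed (epigraph C h)"
  proof -
    have "epigraph C h = (C \<times> UNIV) \<inter> (\<lambda>p. h (fst p) - snd p) -` {..0}"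
      by (auto simp: epigraph_def)
    also have "closed \<dots>"
      using assms(1) by (intro continuous_closed_preimage closed_Times continuous_intros
          continuous_on_compose2[OF assms(3)]) auto
    finally show ?thesis .
  qed
  moreover have "convex (epigraph C h)" using assms(2) by (rule convex_epigraphI)
  moreover have "(x0, h x0 - e) \<notin> epigraph C h" using assms(5) by (simp add: mem_epigraph)
  ultimately obtain w b' where
    sep: "w \<bullet> (x0, h x0 - e) < b'" "\<And>p. p \<in> epigraph C h \<Longrightarrow> b' < w \<bullet> p"
    by (metis separating_hyperplane_closed_point)
  obtain a1 \<beta> where w: "w = (a1, \<beta>)" by fastforce
  have below: "a1 \<bullet> x0 + \<beta> * (h x0 - e) < b'" using sep(1) by (simp add: w inner_Pair)
  have above: "b' < a1 \<bullet> x + \<beta> * h x" if "x \<in> C" for x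
    using sep(2)[of "(x, h x)"] that by (simp add: w inner_Pair mem_epigraph)
  have "\<beta> * e > 0" using below above[OF assms(4)] by (simp add: algebra_simps)
  then have "\<beta> > 0" using assms(5) by (simp add: zero_less_mult_iff)
  \<comment> \<open>the hyperplane is not vertical, so it is the graph of an affine function below h\<close>
  define a where "a = - a1 /\<^sub>R \<beta>"
  define b where "b = b' / \<beta>"
  have aff: "a \<bullet> x + b = (b' - a1 \<bullet> x) / \<beta>" for x
    by (simp add: a_def b_def divide_inverse_commute right_diff_distrib)
  have "a \<bullet> x + b \<le> h x" if "x \<in> C" for x
    unfolding aff using above[OF that] \<open>\<beta> > 0\<close> by (simp add: pos_divide_le_eq algebra_simps)
  moreover have "h x0 - e < a \<bullet> x0 + b"
  proof -
    have "(h x0 - e) * \<beta> < b' - a1 \<bullet> x0" using below by (simp add: algebra_simps)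
    then show ?thesis unfolding aff using \<open>\<beta> > 0\<close> by (simp add: pos_less_divide_eq)
  qed
  ultimately show ?thesis by blast
qed

lemma convex_on_approx_Max_affine:
  fixes h :: "'a::euclidean_space \<Rightarrow> real"
  assumes "compact C" "convex_on C h" "continuous_on C h" "0 < e"
  shows "\<exists>L. finite L \<and> L \<noteq> {} \<and>
    (\<forall>x\<in>C. h x - e \<le> Max ((\<lambda>(a, b). a \<bullet> x + b) ` L) \<and> Max ((\<lambda>(a, b). a \<bullet> x + b) ` L) \<le> h x)"
proof -
  define aff :: "'a \<times> real \<Rightarrow> 'a \<Rightarrow> real" where "aff = (\<lambda>(a, b) x. a \<bullet> x + b)"
  have "\<exists>ab. (\<forall>x\<in>C. aff ab x \<le> h x) \<and> h x0 - e < aff ab x0" if "x0 \<in> C" for x0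
    using convex_on_affine_minorant[OF compact_imp_closed[OF assms(1)] assms(2,3) that assms(4)]
    by (auto simp: aff_def)
  then obtain m where m_le: "\<And>x0 x. x0 \<in> C \<Longrightarrow> x \<in> C \<Longrightarrow> aff (m x0) x \<le> h x"
    and m_close: "\<And>x0. x0 \<in> C \<Longrightarrow> h x0 - e < aff (m x0) x0"
    by metis
  \<comment> \<open>each minorant stays e-close to h on a neighbourhood of its contact point\<close>
  have "\<exists>U. open U \<and> U \<inter> C = (\<lambda>x. aff (m x0) x - h x) -` {-e<..} \<inter> C" for x0
  proof -
    have "continuous_on C (\<lambda>x. aff (m x0) x - h x)"
      unfolding aff_def case_prod_beta by (intro continuous_intros assms(3))
    then show ?thesis using continuous_on_open_invariant open_greaterThan by blast
  qed
  then obtain U where U_open: "\<And>x0. open (U x0)"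
    and U_eq: "\<And>x0. U x0 \<inter> C = (\<lambda>x. aff (m x0) x - h x) -` {-e<..} \<inter> C"
    by metis
  have cover: "C \<subseteq> (\<Union>x0\<in>C. U x0)"
    using m_close U_eq by fastforce
  obtain F where F: "F \<subseteq> C" "finite F" "C \<subseteq> (\<Union>x0\<in>F. U x0)"
    by (rule compactE_image[OF assms(1) U_open cover])
  show ?thesis
  proof (cases "C = {}")
    case True
    then show ?thesis by (intro exI[of _ "{(0, 0)}"]) auto
  next
    case False
    define L where "L = m ` F"
    have L: "finite L" "L \<noteq> {}" using F False by (auto simp: L_def)
    have "h x - e \<le> Max ((\<lambda>(a, b). a \<bullet> x + b) ` L) \<and> Max ((\<lambda>(a, b). a \<bullet> x + b) ` L) \<le> h x"
      if x: "x \<in> C" for x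
    proof
      obtain x0 where x0: "x0 \<in> F" "x \<in> U x0" using F(3) x by blast
      then have "aff (m x0) x - h x > - e" using U_eq[of x0] x by blast
      then have "h x - e < aff (m x0) x" by simp
      also have "\<dots> \<le> Max ((\<lambda>(a, b). a \<bullet> x + b) ` L)"
        using L x0(1) by (intro Max_ge) (auto simp: L_def aff_def case_prod_beta)
      finally show "h x - e \<le> Max ((\<lambda>(a, b). a \<bullet> x + b) ` L)" by simp
      show "Max ((\<lambda>(a, b). a \<bullet> x + b) ` L) \<le> h x"
        using L F(1) m_le x by (auto simp: L_def aff_def case_prod_beta)
    qed
    with L show ?thesis by blast
  qed
qed

section \<open>The simplex and value functions\<close>

definition ones :: "real^'a::finite" where
  "ones = (\<chi> _. 1)"

lemma Delta_set_component_bounds: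
  assumes "s \<in> Delta_set"
  shows "0 \<le> s $ \<theta> \<and> s $ \<theta> \<le> 1"
proof -
  have nonneg: "\<forall>\<theta>. 0 \<le> s $ \<theta>" using assms by (simp add: Delta_set_def)
  then have "s $ \<theta> \<le> (\<Sum>\<theta>\<in>UNIV. s $ \<theta>)" by (intro member_le_sum) auto
  with assms nonneg show ?thesis by (simp add: Delta_set_def)
qed

lemma Delta_set_le_ones: "s \<in> Delta_set \<Longrightarrow> s \<le> ones"
  by (simp add: less_eq_vec_def ones_def Delta_set_component_bounds)

lemma inner_ones_Delta_set: "s \<in> Delta_set \<Longrightarrow> ones \<bullet> s = 1"
  by (simp add: Delta_set_def ones_def inner_vec_def)

lemma inner_add_ones_Delta_set: "s \<in> Delta_set \<Longrightarrow> (a + b *\<^sub>R ones) \<bullet> s = a \<bullet> s + b"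
  by (simp add: inner_add_left inner_ones_Delta_set)

lemma compact_Delta_set: "compact (Delta_set :: (real^'a::finite) set)"
proof (rule compact_eq_bounded_closed[THEN iffD2], rule conjI)
  show "bounded (Delta_set :: (real^'a) set)"
    unfolding bounded_iff
  proof (intro exI ballI)
    fix s :: "real^'a" assume s: "s \<in> Delta_set"
    have "norm s \<le> (\<Sum>\<theta>\<in>UNIV. \<bar>s $ \<theta>\<bar>)" by (rule norm_le_l1_cart)
    also have "\<dots> = 1" using s Delta_set_component_bounds[OF s] by (simp add: Delta_set_def)
    finally show "norm s \<le> 1" .
  qed
  have "Delta_set = {p::real^'a. \<forall>\<theta>. 0 \<le> p $ \<theta>} \<inter> {p. (\<Sum>\<theta>\<in>UNIV. p $ \<theta>) = 1}"
    by (auto simp: Delta_set_def)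
  also have "closed \<dots>"
    by (intro closed_Int closed_Collect_all closed_Collect_le closed_Collect_eq continuous_intros)
  finally show "closed (Delta_set :: (real^'a) set)" .
qed

lemma convex_Delta_set: "convex (Delta_set :: (real^'a::finite) set)"
  unfolding convex_def Delta_set_def
  by (auto simp: sum.distrib simp flip: sum_distrib_left)

lemma vA_eq_Max_inner: "vA A s = Max ((\<lambda>a. a \<bullet> s) ` A)"
  by (simp add: vA_def inner_vec_def)

lemma vA_insert:
  "finite A \<Longrightarrow> A \<noteq> {} \<Longrightarrow> vA (insert a A) s = max (a \<bullet> s) (vA A s)"
  by (simp add: vA_eq_Max_inner)

lemma max_vA_zero: "finite A \<Longrightarrow> A \<noteq> {} \<Longrightarrow> max (vA A s) 0 = vA (insert 0 A) s"
  by (simp add: vA_insert max.commute)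

lemma inner_le_vA: "finite A \<Longrightarrow> a \<in> A \<Longrightarrow> a \<bullet> s \<le> vA A s"
  by (simp add: vA_eq_Max_inner)

lemma vA_attained:
  assumes "finite A" "A \<noteq> {}"
  shows "\<exists>a\<in>A. vA A s = a \<bullet> s"
proof -
  have "vA A s \<in> (\<lambda>a. a \<bullet> s) ` A"
    unfolding vA_eq_Max_inner using assms by (intro Max_in) auto
  then show ?thesis by auto
qed

lemma continuous_on_vA: "finite A \<Longrightarrow> A \<noteq> {} \<Longrightarrow> continuous_on T (vA A)"
proof (induction A rule: finite_ne_induct)
  case (singleton a)
  then show ?case by (simp add: vA_eq_Max_inner continuous_intros)
next
  case (insert a A)
  then show ?case by (auto simp: vA_insert intro!: continuous_on_max continuous_intros)
qed

lemma convex_on_vA: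
  assumes "finite A" "A \<noteq> {}" "convex T"
  shows "convex_on T (vA A)"
proof (rule convex_onI)
  fix u :: real and x y :: "real^'a"
  assume u: "0 < u" "u < 1"
  obtain a where a: "a \<in> A" "vA A ((1 - u) *\<^sub>R x + u *\<^sub>R y) = a \<bullet> ((1 - u) *\<^sub>R x + u *\<^sub>R y)"
    using vA_attained[OF assms(1,2)] by blast
  have "a \<bullet> ((1 - u) *\<^sub>R x + u *\<^sub>R y) = (1 - u) * (a \<bullet> x) + u * (a \<bullet> y)"
    by (simp add: inner_add_right)
  also have "\<dots> \<le> (1 - u) * vA A x + u * vA A y"
    using u inner_le_vA[OF assms(1) a(1)] by (intro add_mono mult_left_mono) auto
  finally show "vA A ((1 - u) *\<^sub>R x + u *\<^sub>R y) \<le> (1 - u) * vA A x + u * vA A y"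
    using a(2) by simp
qed (fact assms)

lemma vA_image_scaleR:
  assumes "finite A" "A \<noteq> {}" "0 \<le> t"
  shows "vA ((\<lambda>a. t *\<^sub>R a) ` A) s = t * vA A s"
proof -
  have "vA ((\<lambda>a. t *\<^sub>R a) ` A) s = Max ((\<lambda>r. t * r) ` (\<lambda>a. a \<bullet> s) ` A)"
    by (simp add: vA_eq_Max_inner image_image)
  also have "\<dots> = t * vA A s"
    using assms by (subst mono_Max_commute[symmetric]) (auto simp: mono_def mult_left_mono vA_eq_Max_inner)
  finally show ?thesis .
qed

lemma vA_image_add_ones:
  assumes "finite A" "A \<noteq> {}" "s \<in> Delta_set"
  shows "vA ((\<lambda>a. a + b *\<^sub>R ones) ` A) s = vA A s + b"
proof -
  have "vA ((\<lambda>a. a + b *\<^sub>R ones) ` A) s = Max ((\<lambda>r. r + b) ` (\<lambda>a. a \<bullet> s) ` A)"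
    using assms(3) by (simp add: vA_eq_Max_inner image_image inner_add_ones_Delta_set)
  also have "\<dots> = vA A s + b"
    using assms by (subst mono_Max_commute[symmetric]) (auto simp: mono_def vA_eq_Max_inner)
  finally show ?thesis .
qed

lemma convex_on_Delta_set_approx_vA:
  assumes "convex_on Delta_set h" "continuous_on Delta_set h" "0 < e"
  shows "\<exists>A. finite A \<and> A \<noteq> {} \<and> (\<forall>s\<in>Delta_set. h s - e \<le> vA A s \<and> vA A s \<le> h s)"
proof -
  obtain L where L: "finite L" "L \<noteq> {}" and approx:
    "\<forall>s\<in>Delta_set. h s - e \<le> Max ((\<lambda>(a, b). a \<bullet> s + b) ` L) \<and> Max ((\<lambda>(a, b). a \<bullet> s + b) ` L) \<le> h s"
    using convex_on_approx_Max_affine[OF compact_Delta_set assms] by blast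
  \<comment> \<open>on the simplex the constant b is the linear functional b *R ones\<close>
  define A where "A = (\<lambda>(a, b). a + b *\<^sub>R ones) ` L"
  have "vA A s = Max ((\<lambda>(a, b). a \<bullet> s + b) ` L)" if "s \<in> Delta_set" for s
    by (simp add: A_def vA_eq_Max_inner image_image case_prod_beta inner_add_ones_Delta_set[OF that])
  with L approx show ?thesis by (intro exI[of _ A]) (auto simp: A_def)
qed

section \<open>Populations and the value of an interview\<close>

lemma population_space: "population S M \<Longrightarrow> space M = S"
  unfolding population_def using sets_eq_imp_space_eq[of M "restrict_space borel S"]
  by (simp add: space_restrict_space)

lemma population_prob_space: "population S M \<Longrightarrow> prob_space M"
  by (simp add: population_def)

lemma population_measurable_continuous:
  "population S M \<Longrightarrow> continuous_on S h \<Longrightarrow> h \<in> borel_measurable M"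
  unfolding population_def
  by (metis borel_measurable_continuous_on_restrict measurable_cong_sets)

lemma population_integrable_continuous:
  fixes h :: "real^'a::finite \<Rightarrow> real"
  assumes "population S M" "compact K" "S \<subseteq> K" "continuous_on K h"
  shows "integrable M h"
proof -
  interpret prob_space M using assms(1) by (rule population_prob_space)
  obtain B where B: "\<forall>x\<in>K. norm (h x) \<le> B"
    using compact_imp_bounded[OF compact_continuous_image[OF assms(4,2)]] by (auto simp: bounded_iff)
  have "AE x in M. norm (h x) \<le> B"
    using B assms(3) population_space[OF assms(1)] by (intro AE_I2) auto
  moreover have "h \<in> borel_measurable M"
    using population_measurable_continuous[OF assms(1) continuous_on_subset[OF assms(4,3)]] .
  ultimately show ?thesis using integrable_const_bound by blast
qed

lemma (in prob_space) integral_add_const: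
  fixes f :: "'a \<Rightarrow> real"
  shows "integrable M f \<Longrightarrow> (\<integral>x. f x + c \<partial>M) = (\<integral>x. f x \<partial>M) + c"
  by (simp add: Bochner_Integration.integral_add prob_space)

definition interview_value :: "(real^'a::finite) measure \<Rightarrow> (real^'a) set \<Rightarrow> real" where
  "interview_value M A = (\<integral>s. max (vA A s) 0 \<partial>M)"

lemma interview_value_nonneg: "0 \<le> interview_value M A"
  unfolding interview_value_def by (intro integral_nonneg_AE) auto

lemma interview_value_image_scaleR:
  assumes "finite A" "A \<noteq> {}" "0 \<le> t"
  shows "interview_value M ((\<lambda>a. t *\<^sub>R a) ` A) = t * interview_value M A"
proof -
  have "max (t * vA A s) 0 = t * max (vA A s) 0" for s
    using assms(3) by (simp add: max_mult_distrib_left)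
  then show ?thesis
    unfolding interview_value_def using assms by (simp add: vA_image_scaleR)
qed

lemma excludes_imp_excludes_iff:
  assumes "0 < c"
  shows "(\<forall>A \<alpha>. firm A \<alpha> \<longrightarrow> excludes c A \<alpha> N \<longrightarrow> excludes c A \<alpha> M) \<longleftrightarrow>
    (\<forall>A. finite A \<longrightarrow> A \<noteq> {} \<longrightarrow> interview_value M A \<le> interview_value N A)"
    (is "?excl \<longleftrightarrow> ?le")
proof
  assume ?le
  then show ?excl
    unfolding firm_def excludes_def interview_value_def[symmetric]
    by (meson mult_left_mono order_trans less_imp_le)
next
  assume ?excl
  show ?le
  proof (intro allI impI, rule ccontr)
    fix A :: "(real^'a) set"
    assume A: "finite A" "A \<noteq> {}" and "\<not> interview_value M A \<le> interview_value N A"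
    then have less: "interview_value N A < interview_value M A" by simp
    define t where "t = 2 * c / (interview_value N A + interview_value M A)"
    have "0 < interview_value N A + interview_value M A"
      using less interview_value_nonneg[of N A] by linarith
    then have t: "0 < t" "t * interview_value N A < c" "c < t * interview_value M A"
      using less assms by (simp_all add: t_def field_simps)
    have "firm ((\<lambda>a. t *\<^sub>R a) ` A) 1"
      using A by (simp add: firm_def)
    moreover have "excludes c ((\<lambda>a. t *\<^sub>R a) ` A) 1 N" "\<not> excludes c ((\<lambda>a. t *\<^sub>R a) ` A) 1 M"
      using t A unfolding excludes_def interview_value_def[symmetric]
      by (simp_all add: interview_value_image_scaleR)
    ultimately show False using \<open>?excl\<close> by blast
  qed
qed

section \<open>The convex order\<close>

lemma integral_vA_le_of_interview_value_le:
  assumes M: "population S M" and N: "population S N" and S: "S \<subseteq> Delta_set"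
    and le: "\<forall>A. finite A \<longrightarrow> A \<noteq> {} \<longrightarrow> interview_value M A \<le> interview_value N A"
    and A: "finite A" "A \<noteq> {}"
  shows "(\<integral>s. vA A s \<partial>M) \<le> (\<integral>s. vA A s \<partial>N)"
proof -
  obtain K where K: "\<forall>s\<in>Delta_set. norm (vA A s) \<le> K"
    using compact_imp_bounded[OF compact_continuous_image[OF continuous_on_vA[OF A] compact_Delta_set]]
    by (auto simp: bounded_iff)
  \<comment> \<open>shifting A by K makes v_A nonnegative on the simplex, so the truncation at 0 disappears\<close>
  define A' where "A' = (\<lambda>a. a + K *\<^sub>R ones) ` A"
  have "interview_value P A' = (\<integral>s. vA A s \<partial>P) + K" if P: "population S P" for P
  proof -
    interpret prob_space P using P by (rule population_prob_space)
    have "max (vA A' s) 0 = vA A s + K" if "s \<in> space P" for s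
    proof -
      have "s \<in> Delta_set" using that S population_space[OF P] by blast
      then show ?thesis using K vA_image_add_ones[OF A] by (force simp: A'_def)
    qed
    then have "interview_value P A' = (\<integral>s. vA A s + K \<partial>P)"
      unfolding interview_value_def by (rule Bochner_Integration.integral_cong[OF refl])
    also have "\<dots> = (\<integral>s. vA A s \<partial>P) + K"
      using population_integrable_continuous[OF P compact_Delta_set S continuous_on_vA[OF A]]
      by (rule integral_add_const)
    finally show ?thesis .
  qed
  moreover have "interview_value M A' \<le> interview_value N A'"
    using le A by (simp add: A'_def)
  ultimately show ?thesis using M N by simp
qed

lemma M_order_iff_interview_value_le:
  assumes M: "population S M" and N: "population S N" and S: "S \<subseteq> Delta_set"
  shows "M_order N M \<longleftrightarrow> (\<forall>A. finite A \<longrightarrow> A \<noteq> {} \<longrightarrow> interview_value M A \<le> interview_value N A)"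
    (is "_ \<longleftrightarrow> ?le")
proof
  assume "M_order N M"
  show ?le
  proof (intro allI impI)
    fix A :: "(real^'a) set" assume A: "finite A" "A \<noteq> {}"
    have "convex_on Delta_set (vA (insert 0 A))" "continuous_on Delta_set (vA (insert 0 A))"
      using A convex_Delta_set by (auto intro: convex_on_vA continuous_on_vA)
    with \<open>M_order N M\<close> show "interview_value M A \<le> interview_value N A"
      unfolding M_order_def interview_value_def max_vA_zero[OF A] by blast
  qed
next
  assume ?le
  show "M_order N M" unfolding M_order_def
  proof (intro allI impI, elim conjE)
    fix h :: "real^'a \<Rightarrow> real"
    assume convex: "convex_on Delta_set h" and cont: "continuous_on Delta_set h"
    interpret M: prob_space M using M by (rule population_prob_space)
    interpret N: prob_space N using N by (rule population_prob_space)
    have int_h: "integrable P h" if "population S P" for P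
      using population_integrable_continuous[OF that compact_Delta_set S cont] .
    have "(\<integral>s. h s \<partial>M) \<le> (\<integral>s. h s \<partial>N) + e" if "0 < e" for e
    proof -
      obtain A where A: "finite A" "A \<noteq> {}"
        and approx: "\<forall>s\<in>Delta_set. h s - e \<le> vA A s \<and> vA A s \<le> h s"
        using convex_on_Delta_set_approx_vA[OF convex cont \<open>0 < e\<close>] by blast
      have int_vA: "integrable P (vA A)" if "population S P" for P
        using population_integrable_continuous[OF that compact_Delta_set S continuous_on_vA[OF A]] .
      have approx_S: "h s - e \<le> vA A s \<and> vA A s \<le> h s" if "s \<in> S" for s
        using approx S that by blast
      have "(\<integral>s. h s \<partial>M) \<le> (\<integral>s. vA A s + e \<partial>M)"
        using approx_S population_space[OF M]
        by (intro integral_mono int_h[OF M] Bochner_Integration.integrable_add int_vA[OF M]) force+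
      also have "\<dots> = (\<integral>s. vA A s \<partial>M) + e"
        using int_vA[OF M] by (rule M.integral_add_const)
      also have "\<dots> \<le> (\<integral>s. vA A s \<partial>N) + e"
        using integral_vA_le_of_interview_value_le[OF M N S \<open>?le\<close> A] by simp
      also have "\<dots> \<le> (\<integral>s. h s \<partial>N) + e"
        using approx_S population_space[OF N]
        by (intro add_right_mono integral_mono[OF int_vA[OF N] int_h[OF N]]) auto
      finally show ?thesis .
    qed
    then show "(\<integral>s. h s \<partial>M) \<le> (\<integral>s. h s \<partial>N)" by (rule field_le_epsilon)
  qed
qed

lemma M_order_refl: "M_order M M"
  by (simp add: M_order_def)

lemma M_order_iff_excludes_imp_excludes:
  assumes "population S M" "population S N" "S \<subseteq> Delta_set" "0 < c"
  shows "M_order N M \<longleftrightarrow> (\<forall>A \<alpha>. firm A \<alpha> \<longrightarrow> excludes c A \<alpha> N \<longrightarrow> excludes c A \<alpha> M)"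
  by (simp only: M_order_iff_interview_value_le[OF assms(1-3)] excludes_imp_excludes_iff[OF assms(4)])

section \<open>Antisymmetry of the convex order\<close>

text \<open>The cut-off is 1 on t \<le> 0, 0 on t \<ge> 1/n and linear in between; it is written as a
  difference of convex functions of t.\<close>
definition cutoff :: "nat \<Rightarrow> real \<Rightarrow> real" where
  "cutoff n t = 1 - max (real n * t) 0 + max (real n * t - 1) 0"

lemma cutoff_nonpos: "t \<le> 0 \<Longrightarrow> cutoff n t = 1"
  using mult_nonneg_nonpos[of "real n" t] by (simp add: cutoff_def)

lemma abs_cutoff_le_1: "\<bar>cutoff n t\<bar> \<le> 1"
proof (cases "t \<le> 0")
  case False
  then have "0 \<le> real n * t" by simp
  then show ?thesis by (simp add: cutoff_def max_def)
qed (simp add: cutoff_nonpos)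

lemma tendsto_cutoff: "(\<lambda>n. cutoff n t) \<longlonglongrightarrow> (if t \<le> 0 then 1 else 0)"
proof (cases "t \<le> 0")
  case True
  then show ?thesis by (simp add: cutoff_nonpos)
next
  case False
  obtain N :: nat where N: "1 / t < real N" using reals_Archimedean2 by blast
  have "cutoff n t = 0" if "N \<le> n" for n
  proof -
    have "1 < real N * t" using N False by (simp add: field_simps)
    also have "\<dots> \<le> real n * t" using that False by (intro mult_right_mono) auto
    finally show ?thesis using False by (simp add: cutoff_def)
  qed
  then have "\<forall>\<^sub>F n in sequentially. cutoff n t = 0" by (auto simp: eventually_sequentially)
  with False show ?thesis by (simp add: tendsto_eventually)
qed

text \<open>On the simplex this is max over \<theta> of s_\<theta> - x_\<theta>; writing it as a value function v_A makes
  it convex and continuous everywhere.\<close>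
definition orthant_excess :: "real^'a::finite \<Rightarrow> real^'a \<Rightarrow> real" where
  "orthant_excess x = vA (range (\<lambda>i. axis i 1 - x $ i *\<^sub>R ones))"

lemma convex_on_orthant_excess: "convex T \<Longrightarrow> convex_on T (orthant_excess x)"
  unfolding orthant_excess_def by (intro convex_on_vA) auto

lemma continuous_on_orthant_excess: "continuous_on T (orthant_excess x)"
  unfolding orthant_excess_def by (intro continuous_on_vA) auto

lemma orthant_excess_nonpos_iff:
  assumes "s \<in> Delta_set"
  shows "orthant_excess x s \<le> 0 \<longleftrightarrow> s \<le> x"
proof -
  have "orthant_excess x s = Max (range (\<lambda>i. s $ i - x $ i))"
    using assms by (simp add: orthant_excess_def vA_eq_Max_inner image_image inner_diff_left
        inner_ones_Delta_set inner_axis' mult.commute)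
  then show ?thesis by (simp add: less_eq_vec_def)
qed

lemma sets_population_eq_sigma_orthants:
  assumes "population S M" "S \<in> sets borel"
  shows "sets M = sigma_sets S ((\<lambda>x. S \<inter> {..x}) ` UNIV)"
proof -
  have "sets M = (\<inter>) S ` sets borel"
    using assms(1) by (simp add: population_def sets_restrict_space)
  also have "\<dots> = (\<inter>) S ` sigma_sets UNIV (range atMost)"
    by (simp add: borel_eq_atMost sets_measure_of)
  also have "\<dots> = sigma_sets S ((\<inter>) S ` range atMost)"
    using assms(2) by (intro sigma_sets_Int) (auto simp: borel_eq_atMost sets_measure_of)
  finally show ?thesis by (simp add: image_image)
qed

lemma population_eqI_orthants:
  assumes M: "population S M" and N: "population S N"
    and S: "S \<in> sets borel" "S \<subseteq> {..b}"
    and eq: "\<And>x. measure M (S \<inter> {..x}) = measure N (S \<inter> {..x})"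
  shows "M = N"
proof -
  interpret M: prob_space M using M by (rule population_prob_space)
  interpret N: prob_space N using N by (rule population_prob_space)
  show ?thesis
  proof (rule measure_eqI_generator_eq[where A = "\<lambda>_. S"])
    show "Int_stable ((\<lambda>x. S \<inter> {..x}) ` UNIV)"
    proof (rule Int_stableI)
      fix X Y assume "X \<in> (\<lambda>x. S \<inter> {..x}) ` UNIV" "Y \<in> (\<lambda>x. S \<inter> {..x}) ` UNIV"
      then obtain x y where "X = S \<inter> {..x}" "Y = S \<inter> {..y}" by blast
      then have "X \<inter> Y = S \<inter> {..inf x y}" by auto
      then show "X \<inter> Y \<in> (\<lambda>x. S \<inter> {..x}) ` UNIV" by blast
    qed
    show "emeasure M X = emeasure N X" if "X \<in> (\<lambda>x. S \<inter> {..x}) ` UNIV" for X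
      using that eq by (auto simp: M.emeasure_eq_measure N.emeasure_eq_measure)
    show "range (\<lambda>_. S) \<subseteq> (\<lambda>x. S \<inter> {..x}) ` UNIV"
      using S(2) by (auto intro!: image_eqI[where x = b])
  qed (use sets_population_eq_sigma_orthants[OF M S(1)] sets_population_eq_sigma_orthants[OF N S(1)]
      M.emeasure_finite in auto)
qed

lemma tendsto_integral_cutoff_orthant_excess:
  assumes P: "population S P" and S: "S \<subseteq> Delta_set"
  shows "(\<lambda>n. \<integral>s. cutoff n (orthant_excess x s) \<partial>P) \<longlonglongrightarrow> measure P (S \<inter> {..x})"
proof -
  interpret prob_space P using P by (rule population_prob_space)
  have orthant: "S \<inter> {..x} \<in> sets P"
    using P by (auto simp: population_def sets_restrict_space)
  have "(\<lambda>n. \<integral>s. cutoff n (orthant_excess x s) \<partial>P) \<longlonglongrightarrow> (\<integral>s. indicator (S \<inter> {..x}) s \<partial>P)"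
  proof (rule integral_dominated_convergence[where w = "\<lambda>_. 1"])
    show "(\<lambda>s. cutoff n (orthant_excess x s)) \<in> borel_measurable P" for n
      unfolding cutoff_def
      by (intro population_measurable_continuous[OF P] continuous_intros continuous_on_max
          continuous_on_orthant_excess)
    show "AE s in P. (\<lambda>n. cutoff n (orthant_excess x s)) \<longlonglongrightarrow> indicator (S \<inter> {..x}) s"
    proof (rule AE_I2)
      fix s assume "s \<in> space P"
      then have "s \<in> S" "s \<in> Delta_set" using population_space[OF P] S by auto
      then show "(\<lambda>n. cutoff n (orthant_excess x s)) \<longlonglongrightarrow> indicator (S \<inter> {..x}) s"
        using tendsto_cutoff[of "orthant_excess x s"]
        by (cases "s \<le> x") (simp_all add: orthant_excess_nonpos_iff indicator_def)
    qed
    show "AE s in P. norm (cutoff n (orthant_excess x s)) \<le> 1" for n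
      by (simp add: abs_cutoff_le_1)
  qed (use orthant in simp_all)
  then show ?thesis using orthant by simp
qed

lemma integral_cutoff_orthant_excess_eq:
  assumes M: "population S M" and N: "population S N" and S: "S \<subseteq> Delta_set"
    and same: "\<And>f. convex_on Delta_set f \<Longrightarrow> continuous_on Delta_set f \<Longrightarrow>
      (\<integral>s. f s \<partial>M) = (\<integral>s. f s \<partial>N)"
  shows "(\<integral>s. cutoff n (orthant_excess x s) \<partial>M) = (\<integral>s. cutoff n (orthant_excess x s) \<partial>N)"
proof -
  define f1 where "f1 s = max (real n * orthant_excess x s) 0" for s
  define f2 where "f2 s = max (real n * orthant_excess x s - 1) 0" for s
  have convex: "convex_on Delta_set f1" "convex_on Delta_set f2"
    unfolding f1_def f2_def using convex_Delta_set
    by (auto intro!: convex_on_max convex_on_diff convex_on_cmul convex_on_orthant_excess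
        simp: convex_on_const concave_on_const)
  have cont: "continuous_on Delta_set f1" "continuous_on Delta_set f2"
    unfolding f1_def f2_def
    by (auto intro!: continuous_intros continuous_on_max continuous_on_orthant_excess)
  have split: "(\<integral>s. cutoff n (orthant_excess x s) \<partial>P) = 1 - (\<integral>s. f1 s \<partial>P) + (\<integral>s. f2 s \<partial>P)"
    if P: "population S P" for P
  proof -
    interpret prob_space P using P by (rule population_prob_space)
    have int: "integrable P f1" "integrable P f2"
      using population_integrable_continuous[OF P compact_Delta_set S] cont by auto
    have "(\<integral>s. cutoff n (orthant_excess x s) \<partial>P) = (\<integral>s. 1 - f1 s + f2 s \<partial>P)"
      by (simp add: cutoff_def f1_def f2_def)
    also have "\<dots> = (\<integral>s. 1 - f1 s \<partial>P) + (\<integral>s. f2 s \<partial>P)"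
      using int by (intro Bochner_Integration.integral_add) auto
    also have "(\<integral>s. 1 - f1 s \<partial>P) = 1 - (\<integral>s. f1 s \<partial>P)"
      using int by (simp add: Bochner_Integration.integral_diff prob_space)
    finally show ?thesis .
  qed
  show ?thesis
    using split[OF M] split[OF N] same[OF convex(1) cont(1)] same[OF convex(2) cont(2)] by simp
qed

lemma M_order_antisym:
  assumes M: "population S M" and N: "population S N"
    and S: "S \<in> sets borel" "S \<subseteq> Delta_set"
    and "M_order M N" "M_order N M"
  shows "M = N"
proof (rule population_eqI_orthants[OF M N S(1)])
  show "S \<subseteq> {..ones}" using S(2) Delta_set_le_ones by auto
  have "(\<integral>s. f s \<partial>M) = (\<integral>s. f s \<partial>N)"
    if "convex_on Delta_set f" "continuous_on Delta_set f" for f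
    using assms(5,6) that unfolding M_order_def by (simp add: order_antisym)
  then have cutoff_eq:
    "(\<integral>s. cutoff n (orthant_excess x s) \<partial>M) = (\<integral>s. cutoff n (orthant_excess x s) \<partial>N)" for n x
    by (rule integral_cutoff_orthant_excess_eq[OF M N S(2)])
  fix x :: "real^'a"
  have "(\<lambda>n. \<integral>s. cutoff n (orthant_excess x s) \<partial>N) \<longlonglongrightarrow> measure M (S \<inter> {..x})"
    using tendsto_integral_cutoff_orthant_excess[OF M S(2), of x] unfolding cutoff_eq .
  then show "measure M (S \<inter> {..x}) = measure N (S \<inter> {..x})"
    using tendsto_integral_cutoff_orthant_excess[OF N S(2)] by (rule LIMSEQ_unique)
qed

theorem proposition1:
  fixes S :: "(real^'a::finite) set" and c :: real
    and \<pi> \<pi>' :: "(real^'a) measure"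
  assumes "S \<in> sets borel" and "S \<subseteq> Delta_set" and "0 < c"
    and "population S \<pi>" and "population S \<pi>'"
    and "skill \<pi> = skill \<pi>'"
  shows "(sys_disc c \<pi> \<pi>' \<longleftrightarrow> M_order \<pi>' \<pi> \<and> \<pi> \<noteq> \<pi>')
       \<and> (unsys_disc c \<pi> \<pi>' \<longleftrightarrow> \<not> M_order \<pi> \<pi>' \<and> \<not> M_order \<pi>' \<pi>)
       \<and> (no_disc c \<pi> \<pi>' \<longleftrightarrow> \<pi> = \<pi>')"
proof -
  have order: "M_order \<pi>' \<pi> \<longleftrightarrow> (\<forall>A \<alpha>. firm A \<alpha> \<longrightarrow> excludes c A \<alpha> \<pi>' \<longrightarrow> excludes c A \<alpha> \<pi>)"
    "M_order \<pi> \<pi>' \<longleftrightarrow> (\<forall>A \<alpha>. firm A \<alpha> \<longrightarrow> excludes c A \<alpha> \<pi> \<longrightarrow> excludes c A \<alpha> \<pi>')"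
    using M_order_iff_excludes_imp_excludes assms(2-5) by blast+
  have sys: "sys_disc c \<pi> \<pi>' \<longleftrightarrow> M_order \<pi>' \<pi> \<and> \<not> M_order \<pi> \<pi>'"
    and sys': "sys_disc c \<pi>' \<pi> \<longleftrightarrow> M_order \<pi> \<pi>' \<and> \<not> M_order \<pi>' \<pi>"
    and unsys: "unsys_disc c \<pi> \<pi>' \<longleftrightarrow> \<not> M_order \<pi> \<pi>' \<and> \<not> M_order \<pi>' \<pi>"
    unfolding sys_disc_def unsys_disc_def order by blast+
  have eq: "\<pi> = \<pi>' \<longleftrightarrow> M_order \<pi> \<pi>' \<and> M_order \<pi>' \<pi>"
    using M_order_antisym[OF assms(4,5,1,2)] M_order_refl by blast
  show ?thesis
    unfolding no_disc_def sys sys' unsys eq by blast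
qed

end
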